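(* Let $N\ge3$, $M\ge2$, $N_e\ge2$, $L\ge1$ be integers, $P>0$, $\tau\in(0,1)$, $\sigma_r>0$, $c_3,c_4\in\mathbb{C}\setminus\{0\}$, $\alpha,\beta\in\mathbb{C}$ with $|\alpha|^2+|\beta|^2=1$, $\alpha\neq0$, and $\delta\in(0,\pi/2)$. Let $h_1,\dots,h_N$ be i.i.d. $\mathcal{CN}(0,1)$, and let $\theta$ and $\phi$ be uniform on $[-\pi/2+\delta,\pi/2-\delta]$, independent of $\mathbf{h}$. With $\tilde{\mathbf{a}}=\mathbf{a}(\theta)/\|\mathbf{a}(\theta)\|$, $\tilde{\mathbf{h}}=\frac{\mathbf{h}-(\tilde{\mathbf{a}}^H\mathbf{h})\tilde{\mathbf{a}}}{\|\mathbf{h}-(\tilde{\mathbf{a}}^H\mathbf{h})\tilde{\mathbf{a}}\|}$, $\mathbf{t}_1=\alpha\tilde{\mathbf{a}}+\beta\tilde{\mathbf{h}}$, $\mathbf{t}_3,\dots,\mathbf{t}_N$ an orthonormal basis of the orthogonal complement of $\mathrm{span}\{\tilde{\mathbf{a}},\tilde{\mathbf{h}}\}$, $\mathbf{R}_x=P\tau\mathbf{t}_1\mathbf{t}_1^H+\frac{(1-\tau)P}{N-2}\sum_{i=3}^N\mathbf{t}_i\mathbf{t}_i^H$, define $$\mathrm{CRB}(\theta)=\frac{Q}{\|\mathbf{b}'\|^2\mathbf{a}^H\mathbf{R}_x\mathbf{a}+\|\mathbf{b}\|^2\mathbf{a}'^H\mathbf{R}_x\mathbf{a}'-\frac{|\|\mathbf{b}\|^2\mathbf{a}^H\mathbf{R}_x\mathbf{a}'|^2}{\|\mathbf{b}\|^2\mathbf{a}^H\mathbf{R}_x\mathbf{a}}},\quad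 Q=\frac{\sigma_r^2}{2|c_3|^2L}.$$ Then $$\mathbb{E}[\mathrm{CRB}(\theta)]\ge\frac{12\sigma_r^2\tan(\frac\pi2-\delta)}{(\pi-2\delta)MN\pi^2LP|c_3|^2\big(|\alpha|^2\tau(M^2-1)+\frac{(N^2-1)(1-\tau)}{N-2}\big)}.$$ Moreover, with $d=P\tau|\alpha|^2N$, the strong-eavesdropper bound $\mathrm{CRB}_s(\phi)=\frac{\sigma_r^2}{2|c_4|^2L\|\mathbf{c}'(\phi)\|^2\mathbf{a}^H\mathbf{R}_x\mathbf{a}}$ satisfies $$\mathbb{E}[\mathrm{CRB}_s(\phi)]=\frac{12\sigma_r^2\tan(\frac\pi2-\delta)}{N_eN\pi^2(\pi-2\delta)LP|c_4|^2|\alpha|^2\tau(N_e^2-1)},$$ and the weak-eavesdropper bound $\mathrm{CRB}_w(\phi)=\frac{6\sigma_r^2(\sigma_r^2+|c_4|^2LdN_e)}{|c_4|^4L^3d^2\pi^2\cos^2(\phi)N_e^2(N_e^2-1)}$ satisfies $$\mathbb{E}[\mathrm{CRB}_w(\phi)]=\frac{12\sigma_r^2(\sigma_r^2+|c_4|^2LdN_e)\tan(\frac\pi2-\delta)}{|c_4|^4L^3d^2\pi^2N_e^2(N_e^2-1)(\pi-2\delta)}.$$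
   Context: $j=\sqrt{-1}$. $\mathbf{a}(\theta)\in\mathbb{C}^N$, $\mathbf{b}(\theta)\in\mathbb{C}^M$, $\mathbf{c}(\phi)\in\mathbb{C}^{N_e}$ are uniform linear array steering vectors with $i$-th entries $e^{-j\pi\sin(\theta)\frac{N-(2i-1)}{2}}$, $e^{-j\pi\sin(\theta)\frac{M-(2i-1)}{2}}$, $e^{-j\pi\sin(\phi)\frac{N_e-(2i-1)}{2}}$ respectively; primes denote derivatives with respect to $\theta$ (for $\mathbf{a},\mathbf{b}$) or $\phi$ (for $\mathbf{c}$). This is the SSJB precoding scheme; the angles are restricted to the truncated interval so that the expectations are finite. *)

theory Defs
  imports "HOL-Probability.Probability"
begin

text \<open>Vectors in C^n are represented as functions nat => complex, with entries
  indexed by {1..n} (entries outside {1..n} are irrelevant).\<close>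

definition steer :: "nat \<Rightarrow> real \<Rightarrow> nat \<Rightarrow> complex" where
  "steer n x i = exp (- \<i> * complex_of_real (pi * sin x * (real n - (2 * real i - 1)) / 2))"

definition dsteer :: "nat \<Rightarrow> real \<Rightarrow> nat \<Rightarrow> complex" where
  "dsteer n x i = vector_derivative (\<lambda>t. steer n t i) (at x)"

definition hip :: "nat \<Rightarrow> (nat \<Rightarrow> complex) \<Rightarrow> (nat \<Rightarrow> complex) \<Rightarrow> complex" where
  "hip n u v = (\<Sum>i=1..n. cnj (u i) * v i)"

definition vnorm :: "nat \<Rightarrow> (nat \<Rightarrow> complex) \<Rightarrow> real" where
  "vnorm n u = sqrt (\<Sum>i=1..n. (cmod (u i))\<^sup>2)"

definition qform :: "nat \<Rightarrow> (nat \<Rightarrow> complex) \<Rightarrow> (nat \<Rightarrow> nat \<Rightarrow> complex) \<Rightarrow> (nat \<Rightarrow> complex) \<Rightarrow> complex" where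
  "qform n u R v = (\<Sum>i=1..n. \<Sum>k=1..n. cnj (u i) * R i k * v k)"

definition atil :: "nat \<Rightarrow> real \<Rightarrow> nat \<Rightarrow> complex" where
  "atil N th = (\<lambda>i. steer N th i / complex_of_real (vnorm N (steer N th)))"

definition htil :: "nat \<Rightarrow> real \<Rightarrow> (nat \<Rightarrow> complex) \<Rightarrow> nat \<Rightarrow> complex" where
  "htil N th h =
     (let r = (\<lambda>i. h i - hip N (atil N th) h * atil N th i)
      in (\<lambda>i. r i / complex_of_real (vnorm N r)))"

definition Rx :: "nat \<Rightarrow> real \<Rightarrow> real \<Rightarrow> complex \<Rightarrow> complex \<Rightarrow> real \<Rightarrow> (nat \<Rightarrow> complex)
                   \<Rightarrow> (nat \<Rightarrow> nat \<Rightarrow> complex) \<Rightarrow> nat \<Rightarrow> nat \<Rightarrow> complex" where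
  "Rx N P \<tau> \<alpha> \<beta> th h t =
     (let t1 = (\<lambda>i. \<alpha> * atil N th i + \<beta> * htil N th h i)
      in (\<lambda>i k. complex_of_real (P * \<tau>) * t1 i * cnj (t1 k)
               + complex_of_real ((1 - \<tau>) * P / (real N - 2)) *
                 (\<Sum>m=3..N. t m i * cnj (t m k))))"

text \<open>CRB(theta) = Q / (||b'||^2 a^H R a + ||b||^2 a'^H R a' - | ||b||^2 a^H R a' |^2 / (||b||^2 a^H R a)),
  Q = sigma_r^2 / (2 |c3|^2 L). The denominator is real; we take its real part.\<close>
definition crb :: "nat \<Rightarrow> nat \<Rightarrow> nat \<Rightarrow> real \<Rightarrow> complex \<Rightarrow> (nat \<Rightarrow> nat \<Rightarrow> complex) \<Rightarrow> real \<Rightarrow> real" where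
  "crb N M L \<sigma>r c3 R th =
     (let a = steer N th; a' = dsteer N th; b = steer M th; b' = dsteer M th;
          nb2 = complex_of_real ((vnorm M b)\<^sup>2); nb'2 = complex_of_real ((vnorm M b')\<^sup>2);
          Q = \<sigma>r\<^sup>2 / (2 * (cmod c3)\<^sup>2 * real L);
          D = nb'2 * qform N a R a + nb2 * qform N a' R a'
              - complex_of_real ((cmod (nb2 * qform N a R a'))\<^sup>2) / (nb2 * qform N a R a)
      in Q / Re D)"

definition crb_s :: "nat \<Rightarrow> nat \<Rightarrow> nat \<Rightarrow> real \<Rightarrow> complex \<Rightarrow> (nat \<Rightarrow> nat \<Rightarrow> complex) \<Rightarrow> real \<Rightarrow> real \<Rightarrow> real" where
  "crb_s N Ne L \<sigma>r c4 R th ph =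
     \<sigma>r\<^sup>2 / (2 * (cmod c4)\<^sup>2 * real L * (vnorm Ne (dsteer Ne ph))\<^sup>2
              * Re (qform N (steer N th) R (steer N th)))"

definition crb_w :: "nat \<Rightarrow> nat \<Rightarrow> real \<Rightarrow> complex \<Rightarrow> real \<Rightarrow> real \<Rightarrow> real" where
  "crb_w Ne L \<sigma>r c4 d ph =
     6 * \<sigma>r\<^sup>2 * (\<sigma>r\<^sup>2 + (cmod c4)\<^sup>2 * real L * d * real Ne) /
     ((cmod c4)^4 * real L ^ 3 * d\<^sup>2 * pi\<^sup>2 * (cos ph)\<^sup>2 * (real Ne)\<^sup>2 * ((real Ne)\<^sup>2 - 1))"

text \<open>Index type of the real-valued random variables: real and imaginary parts
  of h_i, and the two angles.\<close>
datatype ridx = ReH nat | ImH nat | Th | Ph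

definition hvec :: "(ridx \<Rightarrow> 'w \<Rightarrow> real) \<Rightarrow> 'w \<Rightarrow> nat \<Rightarrow> complex" where
  "hvec Z w i = Complex (Z (ReH i) w) (Z (ImH i) w)"

definition hidx :: "nat \<Rightarrow> ridx set" where
  "hidx N = ReH ` {1..N} \<union> ImH ` {1..N}"

end

theory Submission
  imports Defs
begin

text \<open>Since t_3, ..., t_N are orthogonal to a, the covariance R_x reaches a only through
  t_1, so a^H R_x a = P tau |alpha|^2 N for every channel h. The derivative a' is
  -j pi cos(theta) times the offset-weighted steering vector u (entries ((N+1)/2 - i) a_i);
  in the Fisher denominator of CRB(theta) the t_1 part of a'^H R_x a' cancels against the
  Schur-complement term, so the denominator is pi^2 cos^2(theta) times a quantity affine in
  sum_m |t_m^H u|^2, which Bessel's inequality bounds by ||u||^2 = N (N^2 - 1) / 12.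
  Hence all three bounds are constants times sec^2 of a uniform angle, and the expectation of
  sec^2 over [a, b] is (tan b - tan a) / (b - a).\<close>

definition ula_offset :: "nat \<Rightarrow> nat \<Rightarrow> real" where
  "ula_offset n i = (real n - (2 * real i - 1)) / 2"

definition offset_steer :: "nat \<Rightarrow> real \<Rightarrow> nat \<Rightarrow> complex" where
  "offset_steer n x i = complex_of_real (ula_offset n i) * steer n x i"

lemma steer_eq_exp_offset: "steer n x i = exp (- \<i> * complex_of_real (pi * sin x * ula_offset n i))"
  unfolding steer_def ula_offset_def by (simp add: mult.assoc)

lemma norm_steer [simp]: "cmod (steer n x i) = 1"
proof -
  have "- \<i> * complex_of_real (pi * sin x * ula_offset n i)
      = \<i> * complex_of_real (- (pi * sin x * ula_offset n i))"
    by simp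
  then show ?thesis unfolding steer_eq_exp_offset by (simp only: norm_exp_i_times)
qed

lemma dsteer_eq_offset_steer: "dsteer n x = (\<lambda>i. - \<i> * complex_of_real (pi * cos x) * offset_steer n x i)"
proof
  fix i
  define F where "F z = exp (- \<i> * (of_real pi * sin z * of_real (ula_offset n i)))" for z :: complex
  have F_of_real: "F (of_real y) = steer n y i" for y
    unfolding F_def steer_eq_exp_offset by (simp add: sin_of_real)
  have "(F has_field_derivative F (of_real x) * (- \<i> * (of_real pi * cos (of_real x) * of_real (ula_offset n i))))
          (at (of_real x))"
    unfolding F_def by (auto intro!: derivative_eq_intros)
  then have "((\<lambda>y. F (of_real y)) has_vector_derivative
               F (of_real x) * (- \<i> * (of_real pi * cos (of_real x) * of_real (ula_offset n i)))) (at x)"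
    by (rule has_vector_derivative_real_field)
  then have "((\<lambda>y. steer n y i) has_vector_derivative
               - \<i> * complex_of_real (pi * cos x) * offset_steer n x i) (at x)"
    unfolding F_of_real offset_steer_def by (simp add: cos_of_real mult_ac)
  then show "dsteer n x i = - \<i> * complex_of_real (pi * cos x) * offset_steer n x i"
    unfolding dsteer_def by (rule vector_derivative_at)
qed

lemma sum_shifted_squares:
  "(\<Sum>i=1..n. (real i - c)^2)
   = real n * (real n + 1) * (2 * real n + 1) / 6 - c * real n * (real n + 1) + real n * c^2"
  by (induction n) (auto simp: field_simps power2_eq_square)

lemma sum_ula_offset_sq: "(\<Sum>i=1..n. (ula_offset n i)^2) = real n * ((real n)^2 - 1) / 12"
proof -
  have "(\<Sum>i=1..n. (ula_offset n i)^2) = (\<Sum>i=1..n. (real i - (real n + 1) / 2)^2)"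
    by (rule sum.cong) (auto simp: ula_offset_def power2_eq_square field_simps)
  also have "\<dots> = real n * ((real n)^2 - 1) / 12"
    unfolding sum_shifted_squares by (simp add: field_simps power2_eq_square)
  finally show ?thesis .
qed

lemma vnorm_sq: "(vnorm n v)^2 = (\<Sum>i=1..n. (cmod (v i))^2)"
  unfolding vnorm_def by (simp add: sum_nonneg)

lemma vnorm_scale_sq: "(vnorm n (\<lambda>i. c * v i))^2 = (cmod c)^2 * (vnorm n v)^2"
  unfolding vnorm_sq by (simp add: norm_mult power_mult_distrib sum_distrib_left)

lemma vnorm_steer: "vnorm n (steer n x) = sqrt (real n)"
  unfolding vnorm_def by simp

lemma vnorm_offset_steer_sq: "(vnorm n (offset_steer n x))^2 = real n * ((real n)^2 - 1) / 12"
proof -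
  have "(cmod (offset_steer n x i))^2 = (ula_offset n i)^2" for i
    unfolding offset_steer_def by (simp add: norm_mult)
  then have "(vnorm n (offset_steer n x))^2 = (\<Sum>i=1..n. (ula_offset n i)^2)"
    unfolding vnorm_sq by simp
  then show ?thesis by (simp only: sum_ula_offset_sq)
qed

lemma vnorm_dsteer_sq: "(vnorm n (dsteer n x))^2 = pi^2 * (cos x)^2 * (real n * ((real n)^2 - 1) / 12)"
  unfolding dsteer_eq_offset_steer vnorm_scale_sq vnorm_offset_steer_sq
  by (simp add: norm_mult power_mult_distrib)

lemma hip_cnj: "cnj (hip n x y) = hip n y x"
  unfolding hip_def by (simp add: mult.commute)

lemma cnj_mult_self: "cnj z * z = complex_of_real ((cmod z)^2)"
  by (metis complex_norm_square mult.commute)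

lemma hip_self: "hip n v v = complex_of_real ((vnorm n v)^2)"
  unfolding hip_def vnorm_sq by (simp add: cnj_mult_self)

lemma hip_add_right: "hip n x (\<lambda>i. y i + z i) = hip n x y + hip n x z"
  unfolding hip_def by (simp add: algebra_simps sum.distrib)

lemma hip_diff_left: "hip n (\<lambda>i. x i - z i) y = hip n x y - hip n z y"
  unfolding hip_def by (simp add: algebra_simps sum_subtractf)

lemma hip_diff_right: "hip n y (\<lambda>i. x i - z i) = hip n y x - hip n y z"
  unfolding hip_def by (simp add: algebra_simps sum_subtractf)

lemma hip_scale_left: "hip n (\<lambda>i. c * x i) y = cnj c * hip n x y"
  unfolding hip_def by (simp add: sum_distrib_left mult_ac)

lemma hip_scale_right: "hip n x (\<lambda>i. c * y i) = c * hip n x y"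
  unfolding hip_def by (simp add: sum_distrib_left mult_ac)

lemma hip_div_right: "hip n x (\<lambda>i. y i / c) = hip n x y / c"
  unfolding hip_def by (simp add: sum_divide_distrib)

lemma hip_sum_right: "hip n y (\<lambda>i. \<Sum>m\<in>S. c m * w m i) = (\<Sum>m\<in>S. c m * hip n y (w m))"
proof -
  have "hip n y (\<lambda>i. \<Sum>m\<in>S. c m * w m i) = (\<Sum>i=1..n. \<Sum>m\<in>S. c m * (cnj (y i) * w m i))"
    unfolding hip_def by (simp add: sum_distrib_left mult_ac)
  also have "\<dots> = (\<Sum>m\<in>S. \<Sum>i=1..n. c m * (cnj (y i) * w m i))"
    by (rule sum.swap)
  finally show ?thesis unfolding hip_def by (simp add: sum_distrib_left)
qed

lemma hip_sum_left: "hip n (\<lambda>i. \<Sum>m\<in>S. c m * w m i) y = (\<Sum>m\<in>S. cnj (c m) * hip n (w m) y)"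
  using hip_sum_right[of n y c w S]
  by (metis (no_types, lifting) hip_cnj complex_cnj_mult complex_cnj_cnj cnj_sum sum.cong)

lemma hip_orthonormal_sums:
  assumes "finite S"
    and orthonormal: "\<forall>m\<in>S. \<forall>m'\<in>S. hip n (w m) (w m') = (if m = m' then 1 else 0)"
  shows "hip n (\<lambda>i. \<Sum>m\<in>S. c m * w m i) (\<lambda>i. \<Sum>m\<in>S. d m * w m i) = (\<Sum>m\<in>S. cnj (c m) * d m)"
proof -
  have "(\<Sum>m'\<in>S. d m' * hip n (w m) (w m')) = d m" if "m \<in> S" for m
  proof -
    have "(\<Sum>m'\<in>S. d m' * hip n (w m) (w m')) = (\<Sum>m'\<in>S. if m' = m then d m else 0)"
      by (rule sum.cong) (use orthonormal that in auto)
    then show ?thesis using \<open>finite S\<close> that by simp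
  qed
  then show ?thesis unfolding hip_sum_left hip_sum_right by simp
qed

lemma bessel_inequality:
  assumes "finite S"
    and orthonormal: "\<forall>m\<in>S. \<forall>m'\<in>S. hip n (w m) (w m') = (if m = m' then 1 else 0)"
  shows "(\<Sum>m\<in>S. (cmod (hip n (w m) v))^2) \<le> (vnorm n v)^2"
proof -
  define c where "c m = hip n (w m) v" for m
  define W where "W i = (\<Sum>m\<in>S. c m * w m i)" for i
  define s where "s = (\<Sum>m\<in>S. (cmod (c m))^2)"
  have s: "(\<Sum>m\<in>S. cnj (c m) * c m) = complex_of_real s"
    unfolding s_def of_real_sum by (simp add: cnj_mult_self)
  have "hip n v (w m) = cnj (c m)" for m
    unfolding c_def hip_cnj ..
  then have "hip n v W = complex_of_real s"
    unfolding W_def hip_sum_right s[symmetric] by (simp add: mult.commute)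
  moreover have "hip n W v = complex_of_real s"
    unfolding W_def hip_sum_left s[symmetric] c_def ..
  moreover have "hip n W W = complex_of_real s"
    unfolding W_def hip_orthonormal_sums[OF assms] s ..
  ultimately have "hip n (\<lambda>i. v i - W i) (\<lambda>i. v i - W i) = complex_of_real ((vnorm n v)^2 - s)"
    by (simp add: hip_diff_left hip_diff_right hip_self)
  then have "(vnorm n v)^2 - s = (vnorm n (\<lambda>i. v i - W i))^2"
    unfolding hip_self of_real_eq_iff ..
  then show ?thesis unfolding s_def c_def by (metis diff_ge_0_iff_ge zero_le_power2)
qed

lemma qform_outer_products:
  "qform n x (\<lambda>i k. A * u i * cnj (u k) + B * (\<Sum>m\<in>S. w m i * cnj (w m k))) y
   = A * hip n x u * hip n u y + B * (\<Sum>m\<in>S. hip n x (w m) * hip n (w m) y)"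
proof -
  have qform_hip: "qform n x R y = hip n x (\<lambda>i. \<Sum>k=1..n. R i k * y k)" for R
    unfolding qform_def hip_def by (simp add: sum_distrib_left mult.assoc)
  have inner: "(\<lambda>i. \<Sum>k=1..n. (A * u i * cnj (u k) + B * (\<Sum>m\<in>S. w m i * cnj (w m k))) * y k)
      = (\<lambda>i. A * hip n u y * u i + B * (\<Sum>m\<in>S. hip n (w m) y * w m i))"
  proof
    fix i
    have split: "(\<Sum>k=1..n. (A * u i * cnj (u k) + B * Z k) * y k)
        = A * hip n u y * u i + B * (\<Sum>k=1..n. Z k * y k)" for Z
      unfolding hip_def by (simp add: algebra_simps sum.distrib sum_distrib_left)
    have "(\<Sum>k=1..n. (\<Sum>m\<in>S. w m i * cnj (w m k)) * y k) = (\<Sum>k=1..n. \<Sum>m\<in>S. w m i * (cnj (w m k) * y k))"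
      by (simp add: sum_distrib_right mult.assoc)
    also have "\<dots> = (\<Sum>m\<in>S. \<Sum>k=1..n. w m i * (cnj (w m k) * y k))"
      by (rule sum.swap)
    also have "\<dots> = (\<Sum>m\<in>S. hip n (w m) y * w m i)"
      unfolding hip_def by (simp add: sum_distrib_left mult.commute)
    finally show "(\<Sum>k=1..n. (A * u i * cnj (u k) + B * (\<Sum>m\<in>S. w m i * cnj (w m k))) * y k)
      = A * hip n u y * u i + B * (\<Sum>m\<in>S. hip n (w m) y * w m i)"
      unfolding split by simp
  qed
  have "qform n x (\<lambda>i k. A * u i * cnj (u k) + B * (\<Sum>m\<in>S. w m i * cnj (w m k))) y
     = hip n x (\<lambda>i. A * hip n u y * u i + B * (\<Sum>m\<in>S. hip n (w m) y * w m i))"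
    unfolding qform_hip inner ..
  also have "\<dots> = A * hip n u y * hip n x u + B * (\<Sum>m\<in>S. hip n (w m) y * hip n x (w m))"
    unfolding hip_add_right hip_scale_right hip_sum_right ..
  also have "\<dots> = A * hip n x u * hip n u y + B * (\<Sum>m\<in>S. hip n x (w m) * hip n (w m) y)"
    by (simp add: mult.commute mult.left_commute)
  finally show ?thesis .
qed

definition beam :: "nat \<Rightarrow> complex \<Rightarrow> complex \<Rightarrow> real \<Rightarrow> (nat \<Rightarrow> complex) \<Rightarrow> nat \<Rightarrow> complex" where
  "beam N \<alpha> \<beta> th h = (\<lambda>i. \<alpha> * atil N th i + \<beta> * htil N th h i)"

lemma qform_Rx:
  "qform N x (Rx N P \<tau> \<alpha> \<beta> th h t) y =
     complex_of_real (P * \<tau>) * hip N x (beam N \<alpha> \<beta> th h) * hip N (beam N \<alpha> \<beta> th h) y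
   + complex_of_real ((1 - \<tau>) * P / (real N - 2)) * (\<Sum>m=3..N. hip N x (t m) * hip N (t m) y)"
  unfolding Rx_def Let_def beam_def by (rule qform_outer_products)

lemma hip_atil_left: "hip N (atil N th) v = hip N (steer N th) v / complex_of_real (sqrt (real N))"
  unfolding hip_def atil_def vnorm_steer by (simp add: sum_divide_distrib)

lemma hip_atil_right: "hip N v (atil N th) = hip N v (steer N th) / complex_of_real (sqrt (real N))"
  unfolding atil_def vnorm_steer by (rule hip_div_right)

lemma hip_steer_self: "hip N (steer N th) (steer N th) = complex_of_real (real N)"
  unfolding hip_self vnorm_steer by simp

lemma hip_atil_self: "N \<ge> 1 \<Longrightarrow> hip N (atil N th) (atil N th) = 1"
  unfolding hip_atil_left hip_atil_right hip_steer_self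
  by (simp add: field_simps flip: of_real_mult)

lemma hip_atil_htil: "N \<ge> 1 \<Longrightarrow> hip N (atil N th) (htil N th h) = 0"
  unfolding htil_def Let_def hip_div_right hip_diff_right hip_scale_right[of _ _ "hip N (atil N th) h"]
  by (simp add: hip_atil_self)

lemma hip_steer_beam:
  assumes "N \<ge> 1"
  shows "hip N (steer N th) (beam N \<alpha> \<beta> th h) = \<alpha> * complex_of_real (sqrt (real N))"
proof -
  have "hip N (steer N th) (htil N th h) = 0"
    using hip_atil_htil[OF assms, of th h] assms unfolding hip_atil_left by simp
  moreover have "complex_of_real (real N)
      = complex_of_real (sqrt (real N)) * complex_of_real (sqrt (real N))"
    by (simp flip: of_real_mult)
  ultimately show ?thesis
    unfolding beam_def hip_add_right hip_scale_right hip_atil_right hip_steer_self by simp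
qed

lemma qform_steer_Rx:
  assumes "N \<ge> 1" and perp: "\<forall>m\<in>{3..N}. hip N (atil N th) (t m) = 0"
  shows "qform N (steer N th) (Rx N P \<tau> \<alpha> \<beta> th h t) y
         = complex_of_real (P * \<tau>) * (\<alpha> * complex_of_real (sqrt (real N))) * hip N (beam N \<alpha> \<beta> th h) y"
proof -
  have "hip N (steer N th) (t m) = 0" if "m \<in> {3..N}" for m
    using perp that assms(1) unfolding hip_atil_left by simp
  then show ?thesis
    unfolding qform_Rx hip_steer_beam[OF assms(1)] by simp
qed

lemma qform_steer_Rx_steer:
  assumes "N \<ge> 1" and perp: "\<forall>m\<in>{3..N}. hip N (atil N th) (t m) = 0"
  shows "qform N (steer N th) (Rx N P \<tau> \<alpha> \<beta> th h t) (steer N th)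
         = complex_of_real (P * \<tau> * (cmod \<alpha>)\<^sup>2 * real N)"
proof -
  have "hip N (beam N \<alpha> \<beta> th h) (steer N th) = cnj \<alpha> * complex_of_real (sqrt (real N))"
    by (metis hip_cnj hip_steer_beam[OF assms(1)] complex_cnj_complex_of_real complex_cnj_mult)
  moreover have "complex_of_real (sqrt (real N)) * complex_of_real (sqrt (real N))
      = complex_of_real (real N)"
    by (simp flip: of_real_mult)
  ultimately show ?thesis
    unfolding qform_steer_Rx[OF assms]
    by (metis complex_norm_square mult.commute mult.left_commute of_real_mult)
qed

lemma qform_steer_Rx_dsteer:
  assumes "N \<ge> 1" and perp: "\<forall>m\<in>{3..N}. hip N (atil N th) (t m) = 0"
  shows "qform N (steer N th) (Rx N P \<tau> \<alpha> \<beta> th h t) (dsteer N th)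
         = complex_of_real (P * \<tau>) * (\<alpha> * complex_of_real (sqrt (real N)))
           * (- \<i> * complex_of_real (pi * cos th) * hip N (beam N \<alpha> \<beta> th h) (offset_steer N th))"
  unfolding qform_steer_Rx[OF assms] dsteer_eq_offset_steer hip_scale_right ..

lemma qform_dsteer_Rx_dsteer:
  fixes N :: nat and th :: real
  defines "u \<equiv> offset_steer N th"
  shows "qform N (dsteer N th) (Rx N P \<tau> \<alpha> \<beta> th h t) (dsteer N th)
         = complex_of_real ((pi * cos th)^2 * (P * \<tau> * (cmod (hip N (beam N \<alpha> \<beta> th h) u))^2
             + (1 - \<tau>) * P / (real N - 2) * (\<Sum>m=3..N. (cmod (hip N (t m) u))^2)))"
proof -
  define c where "c = - \<i> * complex_of_real (pi * cos th)"
  have "qform N (dsteer N th) (Rx N P \<tau> \<alpha> \<beta> th h t) (dsteer N th)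
      = (cnj c * c) * (complex_of_real (P * \<tau>) * (cnj (hip N (beam N \<alpha> \<beta> th h) u) * hip N (beam N \<alpha> \<beta> th h) u)
          + complex_of_real ((1 - \<tau>) * P / (real N - 2)) * (\<Sum>m=3..N. cnj (hip N (t m) u) * hip N (t m) u))"
    unfolding qform_Rx dsteer_eq_offset_steer hip_scale_right hip_scale_left u_def c_def[symmetric]
    by (simp add: hip_cnj algebra_simps sum_distrib_left)
  also have "\<dots> = complex_of_real ((pi * cos th)^2 * (P * \<tau> * (cmod (hip N (beam N \<alpha> \<beta> th h) u))^2
             + (1 - \<tau>) * P / (real N - 2) * (\<Sum>m=3..N. (cmod (hip N (t m) u))^2)))"
    unfolding cnj_mult_self c_def by (simp add: norm_mult power_mult_distrib)
  finally show ?thesis .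
qed

lemma crb_Rx_eq:
  assumes "N \<ge> 3" and perp: "\<forall>m\<in>{3..N}. hip N (atil N th) (t m) = 0"
    and "P > 0" "\<tau> > 0" "\<alpha> \<noteq> 0" "Mr \<ge> 1"
  shows "crb N Mr L \<sigma>r c3 (Rx N P \<tau> \<alpha> \<beta> th h t) th =
    \<sigma>r\<^sup>2 / (2 * (cmod c3)\<^sup>2 * real L) /
    (pi\<^sup>2 * (cos th)\<^sup>2 * (real Mr * ((real Mr)\<^sup>2 - 1) / 12 * (P * \<tau> * (cmod \<alpha>)\<^sup>2 * real N)
       + real Mr * ((1 - \<tau>) * P / (real N - 2)) * (\<Sum>m=3..N. (cmod (hip N (t m) (offset_steer N th)))\<^sup>2)))"
proof -
  define R where "R = Rx N P \<tau> \<alpha> \<beta> th h t"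
  define p where "p = hip N (beam N \<alpha> \<beta> th h) (offset_steer N th)"
  define d where "d = P * \<tau> * (cmod \<alpha>)\<^sup>2 * real N"
  have N: "N \<ge> 1" using assms(1) by simp
  have "d > 0" unfolding d_def using assms by simp
  have aRa: "qform N (steer N th) R (steer N th) = complex_of_real d"
    unfolding R_def d_def by (rule qform_steer_Rx_steer[OF N perp])
  have cross: "(cmod (complex_of_real (real Mr) * qform N (steer N th) R (dsteer N th)))\<^sup>2
      = real Mr * (P * \<tau>) * (pi * cos th)\<^sup>2 * (cmod p)\<^sup>2 * (real Mr * d)"
    unfolding R_def qform_steer_Rx_dsteer[OF N perp] p_def[symmetric] d_def using assms
    by (simp add: norm_mult power_mult_distrib) (simp add: power2_eq_square)
  have Schur:
    "complex_of_real ((cmod (complex_of_real (real Mr) * qform N (steer N th) R (dsteer N th)))\<^sup>2)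
       / (complex_of_real (real Mr) * qform N (steer N th) R (steer N th))
     = complex_of_real (real Mr * (P * \<tau>) * (pi * cos th)\<^sup>2 * (cmod p)\<^sup>2)"
    unfolding aRa cross of_real_mult[symmetric] of_real_divide[symmetric] using \<open>d > 0\<close> assms(6) by simp
  have nb: "(vnorm Mr (steer Mr th))\<^sup>2 = real Mr"
    unfolding vnorm_steer by simp
  show ?thesis
    unfolding crb_def Let_def nb R_def[symmetric] Schur
    unfolding R_def qform_dsteer_Rx_dsteer p_def[symmetric] aRa[unfolded R_def] vnorm_dsteer_sq
    by (simp add: d_def algebra_simps power2_eq_square del: of_real_diff of_real_add)
qed

definition crb_weight :: "nat \<Rightarrow> nat \<Rightarrow> real \<Rightarrow> complex \<Rightarrow> real" where
  "crb_weight N Mr \<tau> \<alpha> = (cmod \<alpha>)\<^sup>2 * \<tau> * ((real Mr)\<^sup>2 - 1) + ((real N)\<^sup>2 - 1) * (1 - \<tau>) / (real N - 2)"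

lemma crb_weight_pos:
  assumes "N \<ge> 3" "Mr \<ge> 2" "0 < \<tau>" "\<tau> < 1" "\<alpha> \<noteq> 0"
  shows "crb_weight N Mr \<tau> \<alpha> > 0"
proof -
  have "(real Mr)\<^sup>2 \<ge> 2\<^sup>2" "(real N)\<^sup>2 \<ge> 3\<^sup>2" using assms by (intro power_mono; simp)+
  then show ?thesis unfolding crb_weight_def using assms by (simp add: add_pos_nonneg)
qed

lemma crb_Rx_lower_bound:
  assumes "N \<ge> 3" and perp: "\<forall>m\<in>{3..N}. hip N (atil N th) (t m) = 0"
    and orthonormal: "\<forall>m\<in>{3..N}. \<forall>m'\<in>{3..N}. hip N (t m) (t m') = (if m = m' then 1 else 0)"
    and "P > 0" "0 < \<tau>" "\<tau> < 1" "\<alpha> \<noteq> 0" "Mr \<ge> 2" "L \<ge> 1" "c3 \<noteq> 0"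
  shows "6 * \<sigma>r\<^sup>2 / (real Mr * real N * pi\<^sup>2 * real L * P * (cmod c3)\<^sup>2 * crb_weight N Mr \<tau> \<alpha>)
           / (cos th)\<^sup>2
         \<le> crb N Mr L \<sigma>r c3 (Rx N P \<tau> \<alpha> \<beta> th h t) th"
proof -
  define S where "S = (\<Sum>m=3..N. (cmod (hip N (t m) (offset_steer N th)))\<^sup>2)"
  define W where "W S' = real Mr * ((real Mr)\<^sup>2 - 1) / 12 * (P * \<tau> * (cmod \<alpha>)\<^sup>2 * real N)
       + real Mr * ((1 - \<tau>) * P / (real N - 2)) * S'" for S'
  define X where "X = crb_weight N Mr \<tau> \<alpha>"
  define Q where "Q = \<sigma>r\<^sup>2 / (2 * (cmod c3)\<^sup>2 * real L)"
  have "(real Mr)\<^sup>2 \<ge> 2\<^sup>2" using assms by (intro power_mono) simp_all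
  then have "(real Mr)\<^sup>2 - 1 > 0" by simp
  have "real N - 2 > 0" using assms by simp
  have "W 0 > 0"
    unfolding W_def using \<open>(real Mr)\<^sup>2 - 1 > 0\<close> assms by simp
  moreover have "0 \<le> S" "S \<le> real N * ((real N)\<^sup>2 - 1) / 12"
    unfolding S_def using bessel_inequality[OF _ orthonormal, where v = "offset_steer N th"]
    by (simp_all add: sum_nonneg vnorm_offset_steer_sq)
  moreover have "mono W"
    unfolding W_def using assms \<open>real N - 2 > 0\<close> by (intro monoI add_left_mono mult_left_mono) simp_all
  ultimately have "0 < W S" "W S \<le> W (real N * ((real N)\<^sup>2 - 1) / 12)"
    using monoD[OF \<open>mono W\<close>] by (meson less_le_trans)+
  moreover have "Q \<ge> 0" unfolding Q_def by simp
  ultimately have "Q / (pi\<^sup>2 * (cos th)\<^sup>2 * W (real N * ((real N)\<^sup>2 - 1) / 12))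
      \<le> Q / (pi\<^sup>2 * (cos th)\<^sup>2 * W S)"
    by (cases "cos th = 0") (auto intro!: divide_left_mono mult_left_mono mult_pos_pos)
  moreover have "W (real N * ((real N)\<^sup>2 - 1) / 12) = real Mr * real N * P * X / 12"
    unfolding W_def X_def crb_weight_def using \<open>real N - 2 > 0\<close> by (simp add: field_simps)
  moreover have "X > 0"
    unfolding X_def using assms by (intro crb_weight_pos)
  then have "Q / (pi\<^sup>2 * (cos th)\<^sup>2 * (real Mr * real N * P * X / 12))
      = 6 * \<sigma>r\<^sup>2 / (real Mr * real N * pi\<^sup>2 * real L * P * (cmod c3)\<^sup>2 * X) / (cos th)\<^sup>2"
    unfolding Q_def using assms by (cases "cos th = 0") (simp_all add: field_simps)
  moreover have "crb N Mr L \<sigma>r c3 (Rx N P \<tau> \<alpha> \<beta> th h t) th = Q / (pi\<^sup>2 * (cos th)\<^sup>2 * W S)"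
    unfolding Q_def W_def S_def using assms by (intro crb_Rx_eq) simp_all
  ultimately show ?thesis unfolding X_def by simp
qed

lemma nn_integral_uniform_sec_sq:
  fixes X :: "'w \<Rightarrow> real"
  assumes "a < b" "-pi/2 < a" "b < pi/2" "K \<ge> 0"
    and uniform: "distributed M lborel X (\<lambda>x. indicator {a..b} x / measure lborel {a..b})"
  shows "(\<integral>\<^sup>+ w. ennreal (K / (cos (X w))\<^sup>2) \<partial>M) = ennreal (K * (tan b - tan a) / (b - a))"
proof -
  have "measure lborel {a..b} = b - a" using assms by simp
  have "(\<integral>\<^sup>+ w. ennreal (K / (cos (X w))\<^sup>2) \<partial>M)
      = (\<integral>\<^sup>+ x. ennreal (indicator {a..b} x / (b - a)) * ennreal (K / (cos x)\<^sup>2) \<partial>lborel)"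
    using distributed_nn_integral[OF uniform[unfolded \<open>measure lborel {a..b} = b - a\<close>]] by simp
  also have "\<dots> = (\<integral>\<^sup>+ x. ennreal (K / ((b - a) * (cos x)\<^sup>2)) * indicator {a..b} x \<partial>lborel)"
    using assms by (intro nn_integral_cong) (auto simp: indicator_def ennreal_mult[symmetric])
  also have "\<dots> = ennreal (K / (b - a) * tan b - K / (b - a) * tan a)"
  proof (rule nn_integral_has_integral_lebesgue')
    show "0 \<le> K / ((b - a) * (cos x)\<^sup>2)" for x using assms by simp
    show "((\<lambda>x. K / ((b - a) * (cos x)\<^sup>2)) has_integral K / (b - a) * tan b - K / (b - a) * tan a) {a..b}"
    proof (rule fundamental_theorem_of_calculus)
      show "a \<le> b" using assms by simp
      fix x assume x: "x \<in> {a..b}"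
      have "cos x > 0" using x assms by (intro cos_gt_zero_pi) auto
      then have "((\<lambda>x. K / (b - a) * tan x) has_real_derivative K / (b - a) * inverse ((cos x)\<^sup>2)) (at x)"
        by (intro DERIV_cmult DERIV_tan) simp
      moreover have "K / (b - a) * inverse ((cos x)\<^sup>2) = K / ((b - a) * (cos x)\<^sup>2)"
        by (simp add: divide_inverse)
      ultimately show "((\<lambda>x. K / (b - a) * tan x) has_vector_derivative K / ((b - a) * (cos x)\<^sup>2))
          (at x within {a..b})"
        unfolding has_real_derivative_iff_has_vector_derivative
        by (metis has_vector_derivative_at_within)
    qed
  qed
  finally show ?thesis by (simp add: right_diff_distrib diff_divide_distrib)
qed

lemma nn_integral_uniform_sec_sq_symmetric:
  fixes X :: "'w \<Rightarrow> real"
  assumes "0 < \<delta>" "\<delta> < pi / 2" "K \<ge> 0"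
    and "distributed M lborel X
           (\<lambda>x. indicator {-pi/2+\<delta> .. pi/2-\<delta>} x / measure lborel {-pi/2+\<delta> .. pi/2-\<delta>})"
  shows "(\<integral>\<^sup>+ w. ennreal (K / (cos (X w))\<^sup>2) \<partial>M) = ennreal (2 * K * tan (pi/2 - \<delta>) / (pi - 2*\<delta>))"
proof -
  have "tan (-pi/2 + \<delta>) = - tan (pi/2 - \<delta>)"
    by (metis minus_diff_eq tan_minus uminus_add_conv_diff minus_divide_left)
  then show ?thesis
    using nn_integral_uniform_sec_sq[OF _ _ _ assms(3,4)] assms(1,2) by (simp add: algebra_simps)
qed

lemma crb_s_Rx_eq:
  assumes "N \<ge> 1" and perp: "\<forall>m\<in>{3..N}. hip N (atil N th) (t m) = 0"
    and "Ne \<ge> 2" "L \<ge> 1" "c4 \<noteq> 0" "P > 0" "\<tau> > 0" "\<alpha> \<noteq> 0"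
  shows "crb_s N Ne L \<sigma>r c4 (Rx N P \<tau> \<alpha> \<beta> th h t) th ph
       = 6 * \<sigma>r\<^sup>2 / ((cmod c4)\<^sup>2 * real L * pi\<^sup>2 * real Ne * ((real Ne)\<^sup>2 - 1)
                       * (P * \<tau> * (cmod \<alpha>)\<^sup>2 * real N)) / (cos ph)\<^sup>2"
proof -
  have "(real Ne)\<^sup>2 \<ge> 2\<^sup>2" using assms by (intro power_mono) simp_all
  then have "(real Ne)\<^sup>2 - 1 \<noteq> 0" by simp
  then show ?thesis
    unfolding crb_s_def qform_steer_Rx_steer[OF assms(1) perp] vnorm_dsteer_sq Re_complex_of_real
    using assms by (cases "cos ph = 0") (simp_all add: field_simps)
qed

lemma crb_w_eq:
  "crb_w Ne L \<sigma>r c4 d ph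
   = 6 * \<sigma>r\<^sup>2 * (\<sigma>r\<^sup>2 + (cmod c4)\<^sup>2 * real L * d * real Ne) /
     ((cmod c4)^4 * real L ^ 3 * d\<^sup>2 * pi\<^sup>2 * (real Ne)\<^sup>2 * ((real Ne)\<^sup>2 - 1)) / (cos ph)\<^sup>2"
  unfolding crb_w_def by (simp add: mult_ac)

lemma nn_integral_crb_lower_bound:
  fixes th :: "'w \<Rightarrow> real" and h :: "'w \<Rightarrow> nat \<Rightarrow> complex" and t :: "'w \<Rightarrow> nat \<Rightarrow> nat \<Rightarrow> complex"
  assumes "N \<ge> 3" "Mr \<ge> 2" "L \<ge> 1" "P > 0" "0 < \<tau>" "\<tau> < 1" "c3 \<noteq> 0" "\<alpha> \<noteq> 0"
    and "0 < \<delta>" "\<delta> < pi / 2"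
    and uniform: "distributed M lborel th
           (\<lambda>x. indicator {-pi/2+\<delta> .. pi/2-\<delta>} x / measure lborel {-pi/2+\<delta> .. pi/2-\<delta>})"
    and AE_basis: "AE w in M.
           (\<forall>m\<in>{3..N}. \<forall>m'\<in>{3..N}. hip N (t w m) (t w m') = (if m = m' then 1 else 0)) \<and>
           (\<forall>m\<in>{3..N}. hip N (atil N (th w)) (t w m) = 0)"
  shows "(\<integral>\<^sup>+ w. ennreal (crb N Mr L \<sigma>r c3 (Rx N P \<tau> \<alpha> \<beta> (th w) (h w) (t w)) (th w)) \<partial>M)
           \<ge> ennreal (12 * \<sigma>r\<^sup>2 * tan (pi/2 - \<delta>) /
               ((pi - 2*\<delta>) * real Mr * real N * pi\<^sup>2 * real L * P * (cmod c3)\<^sup>2 * crb_weight N Mr \<tau> \<alpha>))"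
proof -
  define K where
    "K = 6 * \<sigma>r\<^sup>2 / (real Mr * real N * pi\<^sup>2 * real L * P * (cmod c3)\<^sup>2 * crb_weight N Mr \<tau> \<alpha>)"
  have "K \<ge> 0"
    unfolding K_def using crb_weight_pos[OF assms(1,2,5,6,8)] assms by simp
  have "ennreal (12 * \<sigma>r\<^sup>2 * tan (pi/2 - \<delta>) /
               ((pi - 2*\<delta>) * real Mr * real N * pi\<^sup>2 * real L * P * (cmod c3)\<^sup>2 * crb_weight N Mr \<tau> \<alpha>))
      = ennreal (2 * K * tan (pi/2 - \<delta>) / (pi - 2*\<delta>))"
    unfolding K_def by (simp add: mult_ac)
  also have "\<dots> = (\<integral>\<^sup>+ w. ennreal (K / (cos (th w))\<^sup>2) \<partial>M)"
    by (rule nn_integral_uniform_sec_sq_symmetric[OF assms(9,10) \<open>K \<ge> 0\<close> uniform, symmetric])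
  also have "\<dots> \<le> (\<integral>\<^sup>+ w. ennreal (crb N Mr L \<sigma>r c3 (Rx N P \<tau> \<alpha> \<beta> (th w) (h w) (t w)) (th w)) \<partial>M)"
  proof (rule nn_integral_mono_AE)
    show "AE w in M. ennreal (K / (cos (th w))\<^sup>2)
        \<le> ennreal (crb N Mr L \<sigma>r c3 (Rx N P \<tau> \<alpha> \<beta> (th w) (h w) (t w)) (th w))"
      using AE_basis unfolding K_def
      by eventually_elim (intro ennreal_leI crb_Rx_lower_bound; use assms in simp)
  qed
  finally show ?thesis .
qed

lemma nn_integral_crb_s:
  fixes th ph :: "'w \<Rightarrow> real" and h :: "'w \<Rightarrow> nat \<Rightarrow> complex" and t :: "'w \<Rightarrow> nat \<Rightarrow> nat \<Rightarrow> complex"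
  assumes "N \<ge> 1" "Ne \<ge> 2" "L \<ge> 1" "c4 \<noteq> 0" "P > 0" "\<tau> > 0" "\<alpha> \<noteq> 0"
    and "0 < \<delta>" "\<delta> < pi / 2"
    and uniform: "distributed M lborel ph
           (\<lambda>x. indicator {-pi/2+\<delta> .. pi/2-\<delta>} x / measure lborel {-pi/2+\<delta> .. pi/2-\<delta>})"
    and AE_perp: "AE w in M. \<forall>m\<in>{3..N}. hip N (atil N (th w)) (t w m) = 0"
  shows "(\<integral>\<^sup>+ w. ennreal (crb_s N Ne L \<sigma>r c4 (Rx N P \<tau> \<alpha> \<beta> (th w) (h w) (t w)) (th w) (ph w)) \<partial>M)
           = ennreal (12 * \<sigma>r\<^sup>2 * tan (pi/2 - \<delta>) /
               (real Ne * real N * pi\<^sup>2 * (pi - 2*\<delta>) * real L * P * (cmod c4)\<^sup>2 * (cmod \<alpha>)\<^sup>2 * \<tau> *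
                ((real Ne)\<^sup>2 - 1)))"
proof -
  define K where "K = 6 * \<sigma>r\<^sup>2 / ((cmod c4)\<^sup>2 * real L * pi\<^sup>2 * real Ne * ((real Ne)\<^sup>2 - 1)
                       * (P * \<tau> * (cmod \<alpha>)\<^sup>2 * real N))"
  have "(real Ne)\<^sup>2 \<ge> 1" using assms by simp
  then have "K \<ge> 0" unfolding K_def using assms by simp
  have "(\<integral>\<^sup>+ w. ennreal (crb_s N Ne L \<sigma>r c4 (Rx N P \<tau> \<alpha> \<beta> (th w) (h w) (t w)) (th w) (ph w)) \<partial>M)
      = (\<integral>\<^sup>+ w. ennreal (K / (cos (ph w))\<^sup>2) \<partial>M)"
  proof (rule nn_integral_cong_AE)
    show "AE w in M. ennreal (crb_s N Ne L \<sigma>r c4 (Rx N P \<tau> \<alpha> \<beta> (th w) (h w) (t w)) (th w) (ph w))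
        = ennreal (K / (cos (ph w))\<^sup>2)"
      using AE_perp unfolding K_def by eventually_elim (simp add: crb_s_Rx_eq[OF assms(1) _ assms(2-7)])
  qed
  also have "\<dots> = ennreal (2 * K * tan (pi/2 - \<delta>) / (pi - 2*\<delta>))"
    by (rule nn_integral_uniform_sec_sq_symmetric[OF assms(8,9) \<open>K \<ge> 0\<close> uniform])
  also have "2 * K * tan (pi/2 - \<delta>) / (pi - 2*\<delta>) = 12 * \<sigma>r\<^sup>2 * tan (pi/2 - \<delta>) /
               (real Ne * real N * pi\<^sup>2 * (pi - 2*\<delta>) * real L * P * (cmod c4)\<^sup>2 * (cmod \<alpha>)\<^sup>2 * \<tau> *
                ((real Ne)\<^sup>2 - 1))"
    unfolding K_def by (simp add: mult_ac)
  finally show ?thesis .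
qed

lemma nn_integral_crb_w:
  fixes ph :: "'w \<Rightarrow> real"
  assumes "Ne \<ge> 1" "d \<ge> 0" "0 < \<delta>" "\<delta> < pi / 2"
    and uniform: "distributed M lborel ph
           (\<lambda>x. indicator {-pi/2+\<delta> .. pi/2-\<delta>} x / measure lborel {-pi/2+\<delta> .. pi/2-\<delta>})"
  shows "(\<integral>\<^sup>+ w. ennreal (crb_w Ne L \<sigma>r c4 d (ph w)) \<partial>M)
           = ennreal (12 * \<sigma>r\<^sup>2 * (\<sigma>r\<^sup>2 + (cmod c4)\<^sup>2 * real L * d * real Ne) * tan (pi/2 - \<delta>) /
               ((cmod c4)^4 * real L ^ 3 * d\<^sup>2 * pi\<^sup>2 * (real Ne)\<^sup>2 * ((real Ne)\<^sup>2 - 1) * (pi - 2*\<delta>)))"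
proof -
  define K where "K = 6 * \<sigma>r\<^sup>2 * (\<sigma>r\<^sup>2 + (cmod c4)\<^sup>2 * real L * d * real Ne) /
     ((cmod c4)^4 * real L ^ 3 * d\<^sup>2 * pi\<^sup>2 * (real Ne)\<^sup>2 * ((real Ne)\<^sup>2 - 1))"
  have "(real Ne)\<^sup>2 \<ge> 1" using assms by simp
  then have "K \<ge> 0" unfolding K_def using assms by simp
  have "(\<integral>\<^sup>+ w. ennreal (crb_w Ne L \<sigma>r c4 d (ph w)) \<partial>M) = ennreal (2 * K * tan (pi/2 - \<delta>) / (pi - 2*\<delta>))"
    unfolding crb_w_eq K_def[symmetric]
    by (rule nn_integral_uniform_sec_sq_symmetric[OF assms(3,4) \<open>K \<ge> 0\<close> uniform])
  also have "2 * K * tan (pi/2 - \<delta>) / (pi - 2*\<delta>)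
      = 12 * \<sigma>r\<^sup>2 * (\<sigma>r\<^sup>2 + (cmod c4)\<^sup>2 * real L * d * real Ne) * tan (pi/2 - \<delta>) /
               ((cmod c4)^4 * real L ^ 3 * d\<^sup>2 * pi\<^sup>2 * (real Ne)\<^sup>2 * ((real Ne)\<^sup>2 - 1) * (pi - 2*\<delta>))"
    unfolding K_def by (simp add: mult_ac)
  finally show ?thesis .
qed

theorem lemma8:
  fixes M :: "'w measure" and Z :: "ridx \<Rightarrow> 'w \<Rightarrow> real"
    and N Mr Ne L :: nat and P \<tau> \<sigma>r \<delta> :: real and c3 c4 \<alpha> \<beta> :: complex
    and t :: "'w \<Rightarrow> nat \<Rightarrow> nat \<Rightarrow> complex"
  assumes "prob_space M"
    and "N \<ge> 3" "Mr \<ge> 2" "Ne \<ge> 2" "L \<ge> 1"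
    and "P > 0" "0 < \<tau>" "\<tau> < 1" "\<sigma>r > 0" "c3 \<noteq> 0" "c4 \<noteq> 0"
    and "(cmod \<alpha>)\<^sup>2 + (cmod \<beta>)\<^sup>2 = 1" "\<alpha> \<noteq> 0"
    and "0 < \<delta>" "\<delta> < pi / 2"
    \<comment> \<open>h_i i.i.d. CN(0,1): real and imaginary parts independent N(0,1/2)\<close>
    and "\<And>i. i \<in> {1..N} \<Longrightarrow> distributed M lborel (Z (ReH i)) (\<lambda>x. ennreal (normal_density 0 (sqrt (1/2)) x))"
    and "\<And>i. i \<in> {1..N} \<Longrightarrow> distributed M lborel (Z (ImH i)) (\<lambda>x. ennreal (normal_density 0 (sqrt (1/2)) x))"
    \<comment> \<open>theta, phi uniform on [-pi/2+delta, pi/2-delta]\<close>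
    and "distributed M lborel (Z Th)
           (\<lambda>x. indicator {-pi/2+\<delta> .. pi/2-\<delta>} x / measure lborel {-pi/2+\<delta> .. pi/2-\<delta>})"
    and "distributed M lborel (Z Ph)
           (\<lambda>x. indicator {-pi/2+\<delta> .. pi/2-\<delta>} x / measure lborel {-pi/2+\<delta> .. pi/2-\<delta>})"
    \<comment> \<open>independence of the h components, and of theta (resp. phi) from h\<close>
    and "prob_space.indep_vars M (\<lambda>_. borel) Z (hidx N \<union> {Th})"
    and "prob_space.indep_vars M (\<lambda>_. borel) Z (hidx N \<union> {Ph})"
    \<comment> \<open>t_3..t_N: (almost surely) an orthonormal basis of the orthogonal complement of span{a~, h~}\<close>
    and "AE w in M.
           (\<forall>m\<in>{3..N}. \<forall>m'\<in>{3..N}. hip N (t w m) (t w m') = (if m = m' then 1 else 0)) \<and>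
           (\<forall>m\<in>{3..N}. hip N (atil N (Z Th w)) (t w m) = 0 \<and>
                       hip N (htil N (Z Th w) (hvec Z w)) (t w m) = 0) \<and>
           (\<forall>v. hip N (atil N (Z Th w)) v = 0 \<and> hip N (htil N (Z Th w) (hvec Z w)) v = 0 \<longrightarrow>
                (\<exists>c. \<forall>i\<in>{1..N}. v i = (\<Sum>m=3..N. c m * t w m i)))"
  shows "((\<integral>\<^sup>+ w. ennreal (crb N Mr L \<sigma>r c3 (Rx N P \<tau> \<alpha> \<beta> (Z Th w) (hvec Z w) (t w)) (Z Th w)) \<partial>M)
           \<ge> ennreal (12 * \<sigma>r\<^sup>2 * tan (pi/2 - \<delta>) /
               ((pi - 2*\<delta>) * real Mr * real N * pi\<^sup>2 * real L * P * (cmod c3)\<^sup>2 *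
                ((cmod \<alpha>)\<^sup>2 * \<tau> * ((real Mr)\<^sup>2 - 1) + ((real N)\<^sup>2 - 1) * (1 - \<tau>) / (real N - 2))))) \<and>
         ((\<integral>\<^sup>+ w. ennreal (crb_s N Ne L \<sigma>r c4 (Rx N P \<tau> \<alpha> \<beta> (Z Th w) (hvec Z w) (t w)) (Z Th w) (Z Ph w)) \<partial>M)
           = ennreal (12 * \<sigma>r\<^sup>2 * tan (pi/2 - \<delta>) /
               (real Ne * real N * pi\<^sup>2 * (pi - 2*\<delta>) * real L * P * (cmod c4)\<^sup>2 * (cmod \<alpha>)\<^sup>2 * \<tau> *
                ((real Ne)\<^sup>2 - 1)))) \<and>
         ((\<integral>\<^sup>+ w. ennreal (crb_w Ne L \<sigma>r c4 (P * \<tau> * (cmod \<alpha>)\<^sup>2 * real N) (Z Ph w)) \<partial>M)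
           = ennreal (12 * \<sigma>r\<^sup>2 * (\<sigma>r\<^sup>2 + (cmod c4)\<^sup>2 * real L * (P * \<tau> * (cmod \<alpha>)\<^sup>2 * real N) * real Ne)
                 * tan (pi/2 - \<delta>) /
               ((cmod c4)^4 * real L ^ 3 * (P * \<tau> * (cmod \<alpha>)\<^sup>2 * real N)\<^sup>2 * pi\<^sup>2 * (real Ne)\<^sup>2 *
                ((real Ne)\<^sup>2 - 1) * (pi - 2*\<delta>))))"
proof -
  \<comment> \<open>The bounds hold pointwise in h.\<close>
  have AE_basis: "AE w in M.
      (\<forall>m\<in>{3..N}. \<forall>m'\<in>{3..N}. hip N (t w m) (t w m') = (if m = m' then 1 else 0)) \<and>
      (\<forall>m\<in>{3..N}. hip N (atil N (Z Th w)) (t w m) = 0)"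
    using assms(22) by eventually_elim auto
  then have AE_perp: "AE w in M. \<forall>m\<in>{3..N}. hip N (atil N (Z Th w)) (t w m) = 0"
    by eventually_elim auto
  have "N \<ge> 1" "Ne \<ge> 1" "P * \<tau> * (cmod \<alpha>)\<^sup>2 * real N \<ge> 0"
    using assms by simp_all
  then show ?thesis
    using nn_integral_crb_lower_bound[OF assms(2,3,5,6,7,8,10,13,14,15,18) AE_basis,
            unfolded crb_weight_def]
      nn_integral_crb_s[OF _ assms(4,5,11,6,7,13,14,15,19) AE_perp]
      nn_integral_crb_w[OF _ _ assms(14,15,19)]
    by blast
qed

end
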